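(* There exists an absolute constant $C$ such that for all $t\in\mathbb N$ and all real $\vartheta$ with $\lvert\vartheta\rvert\le\pi$ we have $\|X_t(\vartheta)\|_\infty\le C\lvert\vartheta\rvert^3$.
   Context: Let $\mathsf r(n)$ be the number of (overlapping) occurrences of $\mathtt{11}$ in the binary expansion of $n\in\mathbb N=\{0,1,\dots\}$, and $d(t,n)=\mathsf r(n+t)-\mathsf r(n)$. Let $a_t(k)$, $b_t(k)$ be the asymptotic densities (which exist and form probability distributions on $\mathbb Z$) of $\{n:d(t,2n)=k\}$, $\{n:d(t,2n+1)=k\}$; let $m_t^\alpha,m_t^\beta$ be their means and $v_t^\alpha,v_t^\beta$ their variances. Write $\mathrm e(\vartheta)=\exp(i\vartheta)$. Define $\alpha^*_t(\vartheta)=\exp(m_t^\alpha i\vartheta-\frac12v_t^\alpha\vartheta^2)$, $\beta^*_t(\vartheta)=\exp(m_t^\beta i\vartheta-\frac12 v_t^\beta\vartheta^2)$ and $S^*_t(\vartheta)=(\alpha^*_{2t},\beta^*_{2t},\alpha^*_{2t+1},\beta^*_{2t+1},\alpha^*_{2t+2},\beta^*_{2t+2})^T(\vartheta)$. With $x=\mathrm e(\vartheta)$, define the $6\times6$ matrices \[ D_0(\vartheta)=\frac12\begin{pmatrix}1&1&0&0&0&0\\1&1&0&0&0&0\\1&x&0&0&0&0\\0&0&1&x^{-1}&0&0\\0&0&1&1&0&0\\0&0&x&x^{-1}&0&0\end{pmatrix},\quad D_1(\vartheta)=\frac12\begin{pmatrix}0&0&1&1&0&0\\0&0&x&x^{-1}&0&0\\0&0&x&1&0&0\\0&0&0&0&1&x^{-1}\\0&0&0&0&1&1\\0&0&0&0&1&1\end{pmatrix},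 \] and for $t\in\mathbb N$ let $X_{2t}(\vartheta)=S^*_{2t}(\vartheta)-D_0(\vartheta)S^*_t(\vartheta)$ and $X_{2t+1}(\vartheta)=S^*_{2t+1}(\vartheta)-D_1(\vartheta)S^*_t(\vartheta)$. Here $\|\cdot\|_\infty$ is the maximum norm on $\mathbb C^6$. *)

theory Defs
  imports "HOL-Analysis.Analysis"
begin

definition r11 :: "nat \<Rightarrow> nat" where
  "r11 n = card {i::nat. bit n i \<and> bit n (Suc i)}"

definition dd :: "nat \<Rightarrow> nat \<Rightarrow> int" where
  "dd t n = int (r11 (n + t)) - int (r11 n)"

definition asym_density :: "nat set \<Rightarrow> real" where
  "asym_density A = lim (\<lambda>N. real (card {n\<in>A. n < N}) / real N)"

definition a_dens :: "nat \<Rightarrow> int \<Rightarrow> real" where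
  "a_dens t k = asym_density {n. dd t (2*n) = k}"

definition b_dens :: "nat \<Rightarrow> int \<Rightarrow> real" where
  "b_dens t k = asym_density {n. dd t (2*n+1) = k}"

definition dist_mean :: "(int \<Rightarrow> real) \<Rightarrow> real" where
  "dist_mean p = infsum (\<lambda>k. real_of_int k * p k) UNIV"

definition dist_var :: "(int \<Rightarrow> real) \<Rightarrow> real" where
  "dist_var p = infsum (\<lambda>k. (real_of_int k - dist_mean p)^2 * p k) UNIV"

definition ee :: "real \<Rightarrow> complex" where
  "ee \<theta> = exp (\<i> * complex_of_real \<theta>)"

definition gauss_approx :: "(int \<Rightarrow> real) \<Rightarrow> real \<Rightarrow> complex" where
  "gauss_approx p \<theta> = exp (complex_of_real (dist_mean p) * \<i> * complex_of_real \<theta>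
       - complex_of_real (dist_var p * \<theta>^2 / 2))"

definition alpha_star :: "nat \<Rightarrow> real \<Rightarrow> complex" where
  "alpha_star t = gauss_approx (a_dens t)"

definition beta_star :: "nat \<Rightarrow> real \<Rightarrow> complex" where
  "beta_star t = gauss_approx (b_dens t)"

definition S_star :: "nat \<Rightarrow> real \<Rightarrow> complex list" where
  "S_star t \<theta> = [alpha_star (2*t) \<theta>, beta_star (2*t) \<theta>,
                   alpha_star (2*t+1) \<theta>, beta_star (2*t+1) \<theta>,
                   alpha_star (2*t+2) \<theta>, beta_star (2*t+2) \<theta>]"

definition D0 :: "real \<Rightarrow> complex list list" where
  "D0 \<theta> = (let x = ee \<theta> in map (map (\<lambda>c. c / 2))
     [[1,1,0,0,0,0],
      [1,1,0,0,0,0],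
      [1,x,0,0,0,0],
      [0,0,1,inverse x,0,0],
      [0,0,1,1,0,0],
      [0,0,x,inverse x,0,0]])"

definition D1 :: "real \<Rightarrow> complex list list" where
  "D1 \<theta> = (let x = ee \<theta> in map (map (\<lambda>c. c / 2))
     [[0,0,1,1,0,0],
      [0,0,x,inverse x,0,0],
      [0,0,x,1,0,0],
      [0,0,0,0,1,inverse x],
      [0,0,0,0,1,1],
      [0,0,0,0,1,1]])"

definition mat_vec :: "complex list list \<Rightarrow> complex list \<Rightarrow> complex list" where
  "mat_vec M v = map (\<lambda>row. \<Sum>j<6. row ! j * v ! j) M"

definition vec_sub :: "complex list \<Rightarrow> complex list \<Rightarrow> complex list" where
  "vec_sub u v = map2 (-) u v"

definition X_vec :: "nat \<Rightarrow> real \<Rightarrow> complex list" where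
  "X_vec n \<theta> = (if even n
      then vec_sub (S_star n \<theta>) (mat_vec (D0 \<theta>) (S_star (n div 2) \<theta>))
      else vec_sub (S_star n \<theta>) (mat_vec (D1 \<theta>) (S_star (n div 2) \<theta>)))"

definition max_norm :: "complex list \<Rightarrow> real" where
  "max_norm v = Max (set (map cmod v))"

end

theory Submission
  imports Defs "HOL-Real_Asymp.Real_Asymp"
begin

text \<open>
  From \<open>r(2n) = r(n)\<close> and \<open>r(2n+1) = r(n) + [n odd]\<close>, the values of \<open>d(t,\<cdot>)\<close> on the even and
  on the odd numbers are those of \<open>d(s,\<cdot>)\<close> or \<open>d(s+1,\<cdot>)\<close>, where \<open>t \<in> {2s, 2s+1}\<close>, plus a shift
  by \<open>-1\<close>, \<open>0\<close> or \<open>1\<close>. Splitting sets into even and odd parts, all densities therefore exist, and each of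
  \<open>a\<^sub>t, b\<^sub>t\<close> is the average of a shifted \<open>a\<^sub>s\<close> and a shifted \<open>b\<^sub>s\<close> (resp. \<open>s+1\<close>); these are
  exactly the rows of \<open>D\<^sub>0\<close> and \<open>D\<^sub>1\<close>. So every entry of \<open>X\<^sub>t\<close> compares the Gaussian carrying the
  mean and variance of such a two-point mixture with the mixture of the two Gaussians. Both sides have the
  same first two moments, hence differ by \<open>O(\<bar>\<theta>\<bar>\<^sup>3)\<close>, uniformly as long as the two components have
  boundedly different means and variances. This holds since \<open>a\<^sub>s, b\<^sub>s\<close> have means \<open>\<plusminus>[s odd]/2\<close> and
  the average variance satisfies a contracting recursion.
\<close>

section \<open>Binary recursion of the block counting function\<close>

lemma binary_induct [case_names 0 1 double double_Suc]:
  assumes "P 0" "P 1" "\<And>j. 0 < j \<Longrightarrow> P j \<Longrightarrow> P (2*j)"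
    "\<And>j. 0 < j \<Longrightarrow> P j \<Longrightarrow> P (j+1) \<Longrightarrow> P (2*j+1)"
  shows "P (t::nat)"
proof (induction t rule: less_induct)
  case (less t)
  consider "t = 0" | "t = 1" | j where "t = 2*j" "0 < j" | j where "t = 2*j+1" "0 < j"
    by (metis evenE oddE gr0I mult_0_right add_0)
  then show ?case
    by cases (use assms less.IH in auto)
qed

definition lsb :: "nat \<Rightarrow> int" where
  "lsb n = (if odd n then 1 else 0)"

lemma bit_nat_imp_less: "bit (n::nat) i \<Longrightarrow> i < n"
proof -
  assume "bit n i"
  then have "2 ^ i \<le> n"
    by (metis bit_iff_odd div_less even_zero not_le)
  then show "i < n"
    using less_exp[of i] by linarith
qed

lemma finite_r11_set: "finite {i. bit (n::nat) i \<and> bit n (Suc i)}"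
  by (rule finite_subset[of _ "{..<n}"]) (auto dest: bit_nat_imp_less)

lemma r11_rec: "r11 m = r11 (m div 2) + (if odd m \<and> odd (m div 2) then 1 else 0)"
proof -
  let ?S = "\<lambda>n. {i. bit n i \<and> bit n (Suc i)}"
  have "i \<in> ?S m \<longleftrightarrow> i \<in> (if odd m \<and> odd (m div 2) then {0} else {}) \<union> Suc ` ?S (m div 2)" for i
    by (cases i) (auto simp: bit_Suc bit_0)
  then have "?S m = (if odd m \<and> odd (m div 2) then {0} else {}) \<union> Suc ` ?S (m div 2)"
    by blast
  then show ?thesis
    unfolding r11_def by (simp add: card_image finite_r11_set)
qed

lemma r11_double: "r11 (2*n) = r11 n"
  by (subst r11_rec) simp

lemma r11_double_Suc: "int (r11 (2*n+1)) = int (r11 n) + lsb n"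
  by (subst r11_rec) (simp add: lsb_def)

lemma dd_even_even: "dd (2*t) (2*n) = dd t n"
proof -
  have "2*n+2*t = 2*(n+t)" by simp
  then show ?thesis unfolding dd_def by (simp only: r11_double)
qed

lemma dd_even_odd: "dd (2*t) (2*n+1) = dd t n + lsb (n+t) - lsb n"
proof -
  have "2*n+1+2*t = 2*(n+t)+1" by simp
  then show ?thesis unfolding dd_def by (simp only: r11_double_Suc)
qed

lemma dd_odd_even: "dd (2*t+1) (2*n) = dd t n + lsb (n+t)"
proof -
  have "2*n+(2*t+1) = 2*(n+t)+1" by simp
  then show ?thesis unfolding dd_def by (simp only: r11_double r11_double_Suc)
qed

lemma dd_odd_odd: "dd (2*t+1) (2*n+1) = dd (t+1) n - lsb n"
proof -
  have "2*n+1+(2*t+1) = 2*(n+(t+1))" by simp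
  then show ?thesis unfolding dd_def by (simp only: r11_double r11_double_Suc)
qed

section \<open>Natural density\<close>

definition has_density :: "nat set \<Rightarrow> real \<Rightarrow> bool" where
  "has_density A d \<longleftrightarrow> (\<lambda>N. real (card {n\<in>A. n < N}) / real N) \<longlonglongrightarrow> d"

lemma asym_density_eqI: "has_density A d \<Longrightarrow> asym_density A = d"
  unfolding has_density_def asym_density_def by (rule limI)

lemma has_density_asym_density: "has_density A d \<Longrightarrow> has_density A (asym_density A)"
  by (simp add: asym_density_eqI)

lemma has_density_UNIV: "has_density UNIV 1"
  unfolding has_density_def
  by (rule Lim_transform_eventually[of "\<lambda>_. 1"]) (auto intro: eventually_mono[OF eventually_gt_at_top[of 0]])

lemma has_density_empty: "has_density {} 0"
  by (simp add: has_density_def)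

lemma has_density_bounds:
  assumes "has_density A d"
  shows "0 \<le> d" "d \<le> 1"
proof -
  have lim: "(\<lambda>N. real (card {n\<in>A. n < N}) / real N) \<longlonglongrightarrow> d"
    using assms by (simp add: has_density_def)
  have "card {n\<in>A. n < N} \<le> card {..<N}" for N
    by (rule card_mono) auto
  then have "real (card {n\<in>A. n < N}) / real N \<le> 1" for N
    by (cases "N = 0") (auto simp: divide_le_eq)
  then show "d \<le> 1"
    using LIMSEQ_le_const2[OF lim] by blast
  show "0 \<le> d"
    using LIMSEQ_le_const[OF lim] by auto
qed

lemma card_less_even_odd:
  fixes A :: "nat set"
  shows "card {n\<in>A. n < N} = card {m\<in>{n. 2*n \<in> A}. m < (N+1) div 2} + card {m\<in>{n. 2*n+1 \<in> A}. m < N div 2}"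
proof -
  have split: "{n\<in>A. n < N} = (\<lambda>m. 2*m) ` {m\<in>{n. 2*n \<in> A}. m < (N+1) div 2}
      \<union> (\<lambda>m. 2*m+1) ` {m\<in>{n. 2*n+1 \<in> A}. m < N div 2}" (is "_ = ?E \<union> ?O")
  proof (intro equalityI subsetI)
    fix x assume x: "x \<in> {n\<in>A. n < N}"
    consider m where "x = 2*m" | m where "x = 2*m+1"
      by (metis evenE oddE)
    then show "x \<in> ?E \<union> ?O"
      by cases (use x in auto)
  qed auto
  have "inj (\<lambda>m::nat. 2*m)" "inj (\<lambda>m::nat. 2*m+1)"
    by (auto intro: injI)
  then show ?thesis
    unfolding split by (subst card_Un_disjoint) (auto simp: card_image inj_on_subset dest: arg_cong[where f = even])
qed

lemma tendsto_half_ratio: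
  assumes "\<And>N. \<bar>2 * real (g N) - real N\<bar> \<le> 1"
  shows "(\<lambda>N. real (g N) / real N) \<longlonglongrightarrow> 1/2"
proof -
  have "(\<lambda>N. real (g N) / real N - 1/2) \<longlonglongrightarrow> 0"
  proof (rule Lim_null_comparison)
    show "\<forall>\<^sub>F N in sequentially. norm (real (g N) / real N - 1/2) \<le> inverse (real N)"
      using eventually_gt_at_top[of 0]
    proof (rule eventually_mono)
      fix N :: nat assume "0 < N"
      then have "real (g N) / real N - 1/2 = (2 * real (g N) - real N) / (2 * real N)"
        by (simp add: field_simps)
      then show "norm (real (g N) / real N - 1/2) \<le> inverse (real N)"
        using assms[of N] \<open>0 < N\<close> by (simp add: field_simps)
    qed
  qed (rule lim_inverse_n)
  then show ?thesis
    by (simp add: LIM_zero_iff)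
qed

lemma tendsto_density_rescaled:
  assumes "has_density B b" "\<And>N. \<bar>2 * real (g N) - real N\<bar> \<le> 1"
  shows "(\<lambda>N. real (card {n\<in>B. n < g N}) / real N) \<longlonglongrightarrow> b/2"
proof -
  have g: "filterlim g at_top at_top"
    unfolding filterlim_at_top
  proof
    fix Z :: nat
    show "\<forall>\<^sub>F N in at_top. Z \<le> g N"
      using eventually_ge_at_top[of "2*Z+1"]
    proof (rule eventually_mono)
      fix N assume "2*Z+1 \<le> N"
      then show "Z \<le> g N"
        using assms(2)[of N] by linarith
    qed
  qed
  have "(\<lambda>N. real (card {n\<in>B. n < g N}) / real (g N)) \<longlonglongrightarrow> b"
    using filterlim_compose[OF assms(1)[unfolded has_density_def] g] by (simp add: o_def)
  then have "(\<lambda>N. real (card {n\<in>B. n < g N}) / real (g N) * (real (g N) / real N)) \<longlonglongrightarrow> b * (1/2)"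
    using tendsto_half_ratio[OF assms(2)] by (rule tendsto_mult)
  moreover have "real (card {n\<in>B. n < g N}) / real (g N) * (real (g N) / real N)
      = real (card {n\<in>B. n < g N}) / real N" for N
    by (cases "g N = 0") simp_all
  ultimately show ?thesis
    by (simp only: mult_1_right times_divide_eq_right)
qed

lemma has_density_even_odd:
  assumes "has_density {n. 2*n \<in> A} a" "has_density {n. 2*n+1 \<in> A} b"
  shows "has_density A ((a+b)/2)"
proof -
  have "(\<lambda>N. real (card {m\<in>{n. 2*n \<in> A}. m < (N+1) div 2}) / real N
          + real (card {m\<in>{n. 2*n+1 \<in> A}. m < N div 2}) / real N) \<longlonglongrightarrow> a/2 + b/2"
    by (intro tendsto_add tendsto_density_rescaled assms) linarith+
  then show ?thesis
    unfolding has_density_def card_less_even_odd[of A] by (simp add: add_divide_distrib)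
qed

section \<open>Existence and recursion of the densities\<close>

definition shift_mix :: "int \<Rightarrow> int \<Rightarrow> (int \<Rightarrow> real) \<Rightarrow> (int \<Rightarrow> real) \<Rightarrow> int \<Rightarrow> real" where
  "shift_mix u w p p' = (\<lambda>k. (p (k - u) + p' (k - w)) / 2)"

definition dd_densities :: "nat \<Rightarrow> bool" where
  "dd_densities t \<longleftrightarrow> (\<forall>k. has_density {n. dd t (2*n) = k} (a_dens t k)
                         \<and> has_density {n. dd t (2*n+1) = k} (b_dens t k))"

lemma has_density_level_set:
  assumes "dd_densities s"
    and "\<And>m. f (2*m) = dd s (2*m) + u" "\<And>m. f (2*m+1) = dd s (2*m+1) + w"
  shows "has_density {n. f n = k} (shift_mix u w (a_dens s) (b_dens s) k)"
  unfolding shift_mix_def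
proof (rule has_density_even_odd)
  have "{n. 2*n \<in> {n. f n = k}} = {n. dd s (2*n) = k - u}"
    using assms(2) by auto
  then show "has_density {n. 2*n \<in> {n. f n = k}} (a_dens s (k - u))"
    using assms(1) by (simp add: dd_densities_def)
  have "{n. 2*n+1 \<in> {n. f n = k}} = {n. dd s (2*n+1) = k - w}"
    using assms(3) by auto
  then show "has_density {n. 2*n+1 \<in> {n. f n = k}} (b_dens s (k - w))"
    using assms(1) by (simp add: dd_densities_def)
qed

lemma has_density_dd_even_even:
  "dd_densities t \<Longrightarrow> has_density {n. dd (2*t) (2*n) = k} (shift_mix 0 0 (a_dens t) (b_dens t) k)"
  using has_density_level_set[of t "dd t" 0 0 k] by (simp add: dd_even_even)

lemma has_density_dd_even_odd:
  "dd_densities t \<Longrightarrow>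
    has_density {n. dd (2*t) (2*n+1) = k} (shift_mix (lsb t) (lsb (t+1) - 1) (a_dens t) (b_dens t) k)"
  unfolding dd_even_odd by (rule has_density_level_set) (simp_all add: lsb_def)

lemma has_density_dd_odd_even:
  "dd_densities t \<Longrightarrow>
    has_density {n. dd (2*t+1) (2*n) = k} (shift_mix (lsb t) (lsb (t+1)) (a_dens t) (b_dens t) k)"
  unfolding dd_odd_even by (rule has_density_level_set) (simp_all add: lsb_def)

lemma has_density_dd_odd_odd:
  "dd_densities (t+1) \<Longrightarrow>
    has_density {n. dd (2*t+1) (2*n+1) = k} (shift_mix 0 (-1) (a_dens (t+1)) (b_dens (t+1)) k)"
  unfolding dd_odd_odd by (rule has_density_level_set) (simp_all add: lsb_def)

lemma dd_densitiesI:
  assumes "\<And>k. \<exists>d. has_density {n. dd t (2*n) = k} d" "\<And>k. \<exists>d. has_density {n. dd t (2*n+1) = k} d"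
  shows "dd_densities t"
  using assms unfolding dd_densities_def a_dens_def b_dens_def by (metis has_density_asym_density)

lemma dd_densities_0: "dd_densities 0"
proof -
  have "{n. dd 0 (g n) = k} = (if k = 0 then UNIV else {})" for g :: "nat \<Rightarrow> nat" and k
    by (auto simp: dd_def)
  then have "\<exists>d. has_density {n. dd 0 (g n) = k} d" for g :: "nat \<Rightarrow> nat" and k
    using has_density_UNIV has_density_empty by auto
  then show ?thesis
    by (intro dd_densitiesI)
qed

lemma dd_one_le_one: "dd 1 n \<le> 1"
proof (induction n rule: less_induct)
  case (less n)
  show ?case
  proof (cases "even n")
    case True
    then obtain m where "n = 2*m" by blast
    then show ?thesis
      using dd_odd_even[of 0 m] by (simp add: dd_def lsb_def)
  next
    case False
    then obtain m where "n = 2*m+1" using oddE by blast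
    then show ?thesis
      using dd_odd_odd[of 0 m] less.IH[of m] by (simp add: lsb_def)
  qed
qed

text \<open>The level sets of \<open>dd 1\<close> on odd numbers satisfy a recursion in which level \<open>k\<close> needs
  level \<open>k + 1\<close>; their densities exist by downward induction from the empty levels \<open>k \<ge> 2\<close>.\<close>
lemma dd_densities_1: "dd_densities 1"
proof (rule dd_densitiesI)
  have a: "has_density {n. dd 1 (2*n) = k} (shift_mix 0 1 (a_dens 0) (b_dens 0) k)" for k
    using has_density_dd_odd_even[of 0 k, OF dd_densities_0] by (simp add: lsb_def)
  then show "\<exists>d. has_density {n. dd 1 (2*n) = k} d" for k
    by blast
  have empty: "{n. dd 1 (2*n+1) = k} = {}" if "k \<ge> 2" for k
  proof -
    have "dd 1 (2*n+1) \<noteq> k" for n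
      using dd_one_le_one[of "2*n+1"] that by linarith
    then show ?thesis
      by simp
  qed
  have levels: "\<exists>d. has_density {n. dd 1 (2*n+1) = 2 - int j} d" for j
  proof (induction j)
    case 0
    show ?case
      using empty[of 2] has_density_empty by auto
  next
    case (Suc j)
    let ?k = "2 - int (Suc j)"
    have "{n. 2*n \<in> {n. dd 1 (2*n+1) = ?k}} = {n. dd 1 (2*n) = ?k}"
      using dd_odd_odd[of 0] by (simp add: lsb_def)
    moreover have "{n. 2*n+1 \<in> {n. dd 1 (2*n+1) = ?k}} = {n. dd 1 (2*n+1) = 2 - int j}"
      using dd_odd_odd[of 0] by (auto simp: lsb_def)
    ultimately show ?case
      using has_density_even_odd a Suc.IH by metis
  qed
  show "\<exists>d. has_density {n. dd 1 (2*n+1) = k} d" for k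
  proof (cases "k \<le> 2")
    case True
    then have "k = 2 - int (nat (2 - k))"
      by simp
    then show ?thesis
      using levels by metis
  qed (use empty has_density_empty in auto)
qed

lemma dd_densities: "dd_densities t"
proof (induction t rule: binary_induct)
  case 0
  show ?case by (rule dd_densities_0)
next
  case 1
  show ?case by (rule dd_densities_1)
next
  case (double j)
  then show ?case
    using has_density_dd_even_even has_density_dd_even_odd by (blast intro: dd_densitiesI)
next
  case (double_Suc j)
  then show ?case
    using has_density_dd_odd_even has_density_dd_odd_odd by (blast intro: dd_densitiesI)
qed

lemma a_dens_even: "a_dens (2*t) = shift_mix 0 0 (a_dens t) (b_dens t)"
  using has_density_dd_even_even[OF dd_densities] by (auto simp: a_dens_def asym_density_eqI)

lemma b_dens_even: "b_dens (2*t) = shift_mix (lsb t) (lsb (t+1) - 1) (a_dens t) (b_dens t)"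
  using has_density_dd_even_odd[OF dd_densities] by (auto simp: b_dens_def asym_density_eqI)

lemma a_dens_odd: "a_dens (2*t+1) = shift_mix (lsb t) (lsb (t+1)) (a_dens t) (b_dens t)"
  using has_density_dd_odd_even[OF dd_densities] by (auto simp: a_dens_def asym_density_eqI)

lemma b_dens_odd: "b_dens (2*t+1) = shift_mix 0 (-1) (a_dens (t+1)) (b_dens (t+1))"
  using has_density_dd_odd_odd[OF dd_densities] by (auto simp: b_dens_def asym_density_eqI)

lemma a_dens_bounds: "0 \<le> a_dens t k" "a_dens t k \<le> 1"
  using dd_densities[of t] has_density_bounds unfolding dd_densities_def by blast+

lemma b_dens_bounds: "0 \<le> b_dens t k" "b_dens t k \<le> 1"
  using dd_densities[of t] has_density_bounds unfolding dd_densities_def by blast+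

section \<open>Moments of distributions on the integers\<close>

definition has_moments :: "(int \<Rightarrow> real) \<Rightarrow> real \<Rightarrow> real \<Rightarrow> real \<Rightarrow> bool" where
  "has_moments p s0 s1 s2 \<longleftrightarrow> (\<forall>k. 0 \<le> p k) \<and> (p has_sum s0) UNIV \<and>
     ((\<lambda>k. of_int k * p k) has_sum s1) UNIV \<and> ((\<lambda>k. (of_int k)^2 * p k) has_sum s2) UNIV"

lemma has_sum_int_shift: "((\<lambda>k. f (k - u)) has_sum S) UNIV \<longleftrightarrow> (f has_sum S) UNIV"
  for f :: "int \<Rightarrow> real"
proof -
  have "bij_betw (\<lambda>k::int. k + u) UNIV UNIV"
    by (rule bij_betwI[of _ _ _ "\<lambda>k. k - u"]) auto
  from has_sum_reindex_bij_betw[OF this, of "\<lambda>k. f (k - u)" S] show ?thesis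
    by simp
qed

lemma has_moments_shift:
  assumes "has_moments p s0 s1 s2"
  shows "has_moments (\<lambda>k. p (k - u)) s0 (s1 + of_int u * s0) (s2 + 2 * of_int u * s1 + (of_int u)^2 * s0)"
proof -
  from assms have h0: "(p has_sum s0) UNIV" and h1: "((\<lambda>k. of_int k * p k) has_sum s1) UNIV"
    and h2: "((\<lambda>k. (of_int k)^2 * p k) has_sum s2) UNIV"
    by (auto simp: has_moments_def)
  have "((\<lambda>k. of_int k * p k + of_int u * p k) has_sum (s1 + of_int u * s0)) UNIV"
    by (intro has_sum_add h1 has_sum_cmult_right h0)
  then have m1: "((\<lambda>k. of_int k * p (k - u)) has_sum (s1 + of_int u * s0)) UNIV"
    using has_sum_int_shift[of "\<lambda>k. of_int (k + u) * p k" u] by (simp add: algebra_simps)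
  have "((\<lambda>k. (of_int k)^2 * p k + (2 * of_int u) * (of_int k * p k) + (of_int u)^2 * p k)
      has_sum (s2 + 2 * of_int u * s1 + (of_int u)^2 * s0)) UNIV"
    by (intro has_sum_add h2 has_sum_cmult_right h1 h0)
  then have m2: "((\<lambda>k. (of_int k)^2 * p (k - u)) has_sum (s2 + 2 * of_int u * s1 + (of_int u)^2 * s0)) UNIV"
    using has_sum_int_shift[of "\<lambda>k. (of_int (k + u))^2 * p k" u]
    by (simp add: algebra_simps power2_eq_square)
  show ?thesis
    using assms m1 m2 has_sum_int_shift[of p u s0] by (simp add: has_moments_def)
qed

lemma has_moments_mix:
  assumes "has_moments p s0 s1 s2" "has_moments p' s0' s1' s2'"
  shows "has_moments (\<lambda>k. (p k + p' k) / 2) ((s0 + s0') / 2) ((s1 + s1') / 2) ((s2 + s2') / 2)"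
proof -
  have half: "((\<lambda>k. f k / 2) has_sum (x / 2)) UNIV" if "(f has_sum x) UNIV" for f :: "int \<Rightarrow> real" and x
    using has_sum_cmult_left[OF that, of "1/2"] by simp
  from assms show ?thesis
    unfolding has_moments_def
    by (auto simp: add_divide_distrib distrib_left intro!: half has_sum_add simp del: divide_const_simps(1))
qed

lemma has_moments_shift_mix:
  assumes "has_moments p 1 m s" "has_moments p' 1 m' s'"
  shows "has_moments (shift_mix u w p p') 1 ((m + of_int u + m' + of_int w) / 2)
           ((s + 2 * of_int u * m + (of_int u)^2 + (s' + 2 * of_int w * m' + (of_int w)^2)) / 2)"
  using has_moments_mix[OF has_moments_shift[OF assms(1)] has_moments_shift[OF assms(2)], of u w]
  by (simp add: shift_mix_def add.assoc)

lemma dist_mean_eq: "has_moments p 1 m s \<Longrightarrow> dist_mean p = m"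
  unfolding has_moments_def dist_mean_def by (auto intro: infsumI)

lemma dist_var_eq: "has_moments p 1 m s \<Longrightarrow> dist_var p = s - m^2"
proof -
  assume h: "has_moments p 1 m s"
  then have h0: "(p has_sum 1) UNIV" and h1: "((\<lambda>k. of_int k * p k) has_sum m) UNIV"
    and h2: "((\<lambda>k. (of_int k)^2 * p k) has_sum s) UNIV"
    by (auto simp: has_moments_def)
  have "((\<lambda>k. (of_int k)^2 * p k + (-2 * m) * (of_int k * p k) + m^2 * p k)
      has_sum (s + (-2 * m) * m + m^2 * 1)) UNIV"
    by (intro has_sum_add h2 has_sum_cmult_right h1 h0)
  then have "((\<lambda>k. (of_int k - m)^2 * p k) has_sum (s - m^2)) UNIV"
    by (simp add: power2_eq_square algebra_simps)
  then show ?thesis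
    unfolding dist_var_def dist_mean_eq[OF h] by (rule infsumI)
qed

lemma dist_mean_var_shift_mix:
  assumes "has_moments p 1 m s" "has_moments p' 1 m' s'"
  shows "dist_mean (shift_mix u w p p') = ((m + of_int u) + (m' + of_int w)) / 2"
    and "dist_var (shift_mix u w p p') = (dist_var p + dist_var p') / 2 + ((m + of_int u) - (m' + of_int w))^2 / 4"
proof -
  note mix = has_moments_shift_mix[OF assms, of u w]
  show "dist_mean (shift_mix u w p p') = ((m + of_int u) + (m' + of_int w)) / 2"
    using dist_mean_eq[OF mix] by simp
  show "dist_var (shift_mix u w p p') = (dist_var p + dist_var p') / 2 + ((m + of_int u) - (m' + of_int w))^2 / 4"
    using dist_var_eq[OF mix] dist_var_eq[OF assms(1)] dist_var_eq[OF assms(2)]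
    by (simp add: power2_eq_square field_simps)
qed

lemma dist_var_nonneg: "(\<And>k. 0 \<le> p k) \<Longrightarrow> 0 \<le> dist_var p"
  unfolding dist_var_def by (intro infsum_nonneg) auto

lemma has_moments_unique:
  "has_moments p s0 s1 s2 \<Longrightarrow> has_moments p s0' s1' s2' \<Longrightarrow> s0 = s0' \<and> s1 = s1' \<and> s2 = s2'"
  unfolding has_moments_def using has_sum_unique by blast

lemma abs_le_one_plus_square: "\<bar>x\<bar> \<le> 1 + x^2" for x :: real
proof -
  have "0 \<le> (\<bar>x\<bar> - 1)^2"
    by simp
  also have "\<dots> = 1 + x^2 - 2 * \<bar>x\<bar>"
    by (simp add: power2_eq_square algebra_simps)
  finally show ?thesis
    by simp
qed

lemma has_moments_if_summable:
  assumes nonneg: "\<And>k. 0 \<le> p k" and summable: "(\<lambda>k. (1 + (of_int k)^2) * p k) summable_on UNIV"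
  shows "\<exists>s0 s1 s2. has_moments p s0 s1 s2"
proof -
  have dominated: "g summable_on UNIV" if "\<And>k. \<bar>g k\<bar> \<le> (1 + (of_int k)^2) * p k" for g :: "int \<Rightarrow> real"
  proof -
    have "(\<lambda>k. \<bar>g k\<bar>) summable_on UNIV"
      by (rule summable_on_comparison_test[OF summable]) (simp_all add: that)
    then show ?thesis
      by (simp add: summable_on_iff_abs_summable_on_real[of g])
  qed
  have "p summable_on UNIV"
  proof (rule dominated)
    fix k
    show "\<bar>p k\<bar> \<le> (1 + (of_int k)^2) * p k"
      using mult_right_mono[of 1 "1 + (of_int k)^2" "p k"] nonneg[of k] by simp
  qed
  moreover have "(\<lambda>k. of_int k * p k) summable_on UNIV"
  proof (rule dominated)
    fix k
    show "\<bar>of_int k * p k\<bar> \<le> (1 + (of_int k)^2) * p k"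
      unfolding abs_mult using nonneg[of k] abs_le_one_plus_square[of "of_int k"] by (simp add: mult_right_mono)
  qed
  moreover have "(\<lambda>k. (of_int k)^2 * p k) summable_on UNIV"
  proof (rule dominated)
    fix k
    show "\<bar>(of_int k)^2 * p k\<bar> \<le> (1 + (of_int k)^2) * p k"
      using mult_right_mono[of "(of_int k)^2" "1 + (of_int k)^2" "p k"] nonneg[of k] by (simp add: abs_mult)
  qed
  ultimately have "has_moments p (infsum p UNIV) (\<Sum>\<^sub>\<infinity>k. of_int k * p k) (\<Sum>\<^sub>\<infinity>k. (of_int k)^2 * p k)"
    using nonneg by (simp add: has_moments_def)
  then show ?thesis
    by blast
qed

lemma summable_on_int_abs:
  fixes g :: "nat \<Rightarrow> real"
  assumes "g summable_on UNIV"
  shows "(\<lambda>k::int. g (nat \<bar>k\<bar>)) summable_on UNIV"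
proof -
  have half: "(\<lambda>k::int. g (nat \<bar>k\<bar>)) summable_on range f" if "inj f" "\<And>n. nat \<bar>f n\<bar> = n" for f
  proof -
    have "((\<lambda>k::int. g (nat \<bar>k\<bar>)) \<circ> f) = g"
      using that(2) by (simp add: fun_eq_iff)
    then show ?thesis
      using summable_on_reindex[OF that(1), of "\<lambda>k. g (nat \<bar>k\<bar>)"] assms by simp
  qed
  have "(\<lambda>k::int. g (nat \<bar>k\<bar>)) summable_on (range int \<union> range (\<lambda>n. - int n))"
    by (intro summable_on_union half) (auto simp: inj_def)
  moreover have "range int \<union> range (\<lambda>n. - int n) = UNIV"
    by (auto simp: image_iff intro: int_cases2)
  ultimately show ?thesis
    by simp
qed

lemma summable_on_geometric_moment: "(\<lambda>k::int. (1 + (of_int k)^2) * (1/2::real) ^ nat \<bar>k\<bar>) summable_on UNIV"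
proof -
  have "summable (\<lambda>n. (1 + (real n)^2) * (1/2) ^ n)"
    by (rule summable_comparison_test_bigo[of "\<lambda>n. (3/4) ^ n"]) (simp add: summable_geometric, real_asymp)
  then have "(\<lambda>n. (1 + (real n)^2) * (1/2) ^ n) summable_on UNIV"
    by (rule summable_nonneg_imp_summable_on) simp
  from summable_on_int_abs[OF this] show ?thesis
    by simp
qed

section \<open>Means and variances of the densities\<close>

lemma a_dens_0: "a_dens 0 = (\<lambda>k. if k = 0 then 1 else 0)"
  and b_dens_0: "b_dens 0 = (\<lambda>k. if k = 0 then 1 else 0)"
proof -
  have "asym_density {n. dd 0 (f n) = k} = (if k = 0 then 1 else 0)" for f :: "nat \<Rightarrow> nat" and k
    using asym_density_eqI[OF has_density_UNIV] asym_density_eqI[OF has_density_empty]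
    by (simp add: dd_def)
  then show "a_dens 0 = (\<lambda>k. if k = 0 then 1 else 0)" "b_dens 0 = (\<lambda>k. if k = 0 then 1 else 0)"
    by (simp_all add: fun_eq_iff a_dens_def b_dens_def)
qed

lemma has_moments_point_mass: "has_moments (\<lambda>k. if k = 0 then 1 else 0) 1 0 0"
proof -
  have "(f has_sum f 0) UNIV" if "\<And>k. k \<noteq> 0 \<Longrightarrow> f k = 0" for f :: "int \<Rightarrow> real"
    using has_sum_finite[of "{0}" f] has_sum_cong_neutral[of UNIV "{0}" f f] that by auto
  from this[of "\<lambda>k. if k = 0 then 1 else 0"] this[of "\<lambda>k. of_int k * (if k = 0 then 1 else 0)"]
    this[of "\<lambda>k. (of_int k)^2 * (if k = 0 then 1 else 0)"]
  show ?thesis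
    unfolding has_moments_def by simp
qed

lemma has_moments_a_dens_1: "has_moments (a_dens 1) 1 (1/2) (1/2)"
  using has_moments_shift_mix[OF has_moments_point_mass has_moments_point_mass, of 0 1]
    a_dens_odd[of 0] by (simp add: a_dens_0 b_dens_0 lsb_def)

lemma b_dens_1_rec: "b_dens 1 = (\<lambda>k. (a_dens 1 k + b_dens 1 (k + 1)) / 2)"
  using b_dens_odd[of 0] by (simp add: shift_mix_def)

lemma b_dens_1_ge_2: "k \<ge> 2 \<Longrightarrow> b_dens 1 k = 0"
proof -
  assume "k \<ge> 2"
  then have "dd 1 (2*n+1) \<noteq> k" for n
    using dd_one_le_one[of "2*n+1"] by linarith
  then show ?thesis
    using asym_density_eqI[OF has_density_empty] by (simp add: b_dens_def)
qed

lemma b_dens_1_le: "b_dens 1 k \<le> 2 * (1/2) ^ nat \<bar>k\<bar>"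
proof -
  have neg: "b_dens 1 (- int n) \<le> (1/2) ^ n" for n
  proof (induction n)
    case 0
    then show ?case using b_dens_bounds[of 1 0] by simp
  next
    case (Suc n)
    have "a_dens 1 (- int (Suc n)) = 0"
      using a_dens_odd[of 0] by (simp add: shift_mix_def a_dens_0 b_dens_0 lsb_def)
    then have "b_dens 1 (- int (Suc n)) = b_dens 1 (- int n) / 2"
      using fun_cong[OF b_dens_1_rec, of "- int (Suc n)"] by simp
    then show ?case
      using Suc.IH by simp
  qed
  consider "k < 0" | "k = 0 \<or> k = 1" | "k \<ge> 2"
    by linarith
  then show ?thesis
  proof cases
    case 1
    then show ?thesis
      using neg[of "nat (- k)"] by (simp add: order_trans[of _ "(1/2) ^ nat (- k)"])
  next
    case 2
    then show ?thesis
      using b_dens_bounds[of 1 k] by auto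
  qed (use b_dens_1_ge_2[of k] in simp)
qed

text \<open>Once the moments of \<open>b_dens 1\<close> are known to exist, the self-referential recursion
  \<open>b_dens 1 = shift_mix 0 (-1) (a_dens 1) (b_dens 1)\<close> determines them.\<close>
lemma has_moments_b_dens_1: "has_moments (b_dens 1) 1 (-1/2) (5/2)"
proof -
  have "(\<lambda>k. (1 + (of_int k)^2) * b_dens 1 k) summable_on UNIV"
  proof (rule summable_on_comparison_test[OF summable_on_cmult_right[OF summable_on_geometric_moment, of 2]])
    fix k
    show "(1 + (of_int k)^2) * b_dens 1 k \<le> 2 * ((1 + (of_int k)^2) * (1/2) ^ nat \<bar>k\<bar>)"
      using mult_left_mono[OF b_dens_1_le[of k], of "1 + (of_int k)^2"] by simp
    show "0 \<le> (1 + (of_int k)^2) * b_dens 1 k"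
      using b_dens_bounds[of 1 k] by simp
  qed
  then obtain s0 s1 s2 where b: "has_moments (b_dens 1) s0 s1 s2"
    using has_moments_if_summable b_dens_bounds(1) by blast
  have "has_moments (\<lambda>k. (a_dens 1 k + b_dens 1 (k - (-1))) / 2) ((1 + s0) / 2)
      ((1/2 + (s1 + (-1) * s0)) / 2) ((1/2 + (s2 + 2 * (-1) * s1 + (-1)^2 * s0)) / 2)"
    using has_moments_mix[OF has_moments_a_dens_1 has_moments_shift[OF b, of "-1"]] by simp
  then have "has_moments (b_dens 1) ((1 + s0) / 2) ((1/2 + (s1 - s0)) / 2) ((1/2 + (s2 - 2 * s1 + s0)) / 2)"
    by (subst b_dens_1_rec) simp
  with b have "s0 = (1 + s0) / 2" "s1 = (1/2 + (s1 - s0)) / 2" "s2 = (1/2 + (s2 - 2 * s1 + s0)) / 2"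
    using has_moments_unique by blast+
  then have "s0 = 1" "s1 = -1/2" "s2 = 5/2"
    by simp_all
  with b show ?thesis
    by simp
qed

lemma has_moments_shift_mixI:
  assumes "has_moments p 1 m s" "has_moments p' 1 m' s'" "M = (m + of_int u + m' + of_int w) / 2"
  shows "\<exists>S. has_moments (shift_mix u w p p') 1 M S"
  using has_moments_shift_mix[OF assms(1,2)] assms(3) by blast

lemma has_moments_dens:
  "\<exists>sa sb. has_moments (a_dens t) 1 (lsb t / 2) sa \<and> has_moments (b_dens t) 1 (- lsb t / 2) sb"
proof (induction t rule: binary_induct)
  case 0
  show ?case
    using has_moments_point_mass by (auto simp: a_dens_0 b_dens_0 lsb_def)
next
  case 1
  show ?case
    using has_moments_a_dens_1 has_moments_b_dens_1 by (auto simp: lsb_def)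
next
  case (double j)
  then obtain sa sb where a: "has_moments (a_dens j) 1 (lsb j / 2) sa"
    and b: "has_moments (b_dens j) 1 (- lsb j / 2) sb"
    by blast
  have "\<exists>S. has_moments (a_dens (2*j)) 1 (lsb (2*j) / 2) S"
    unfolding a_dens_even by (rule has_moments_shift_mixI[OF a b]) (simp add: lsb_def)
  moreover have "\<exists>S. has_moments (b_dens (2*j)) 1 (- lsb (2*j) / 2) S"
    unfolding b_dens_even by (rule has_moments_shift_mixI[OF a b]) (simp add: lsb_def)
  ultimately show ?case
    by blast
next
  case (double_Suc j)
  then obtain sa sb sa' sb' where a: "has_moments (a_dens j) 1 (lsb j / 2) sa"
    and b: "has_moments (b_dens j) 1 (- lsb j / 2) sb"
    and a': "has_moments (a_dens (j+1)) 1 (lsb (j+1) / 2) sa'"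
    and b': "has_moments (b_dens (j+1)) 1 (- lsb (j+1) / 2) sb'"
    by blast
  have "\<exists>S. has_moments (a_dens (2*j+1)) 1 (lsb (2*j+1) / 2) S"
    unfolding a_dens_odd by (rule has_moments_shift_mixI[OF a b]) (simp add: lsb_def)
  moreover have "\<exists>S. has_moments (b_dens (2*j+1)) 1 (- lsb (2*j+1) / 2) S"
    unfolding b_dens_odd by (rule has_moments_shift_mixI[OF a' b']) (simp add: lsb_def)
  ultimately show ?case
    by blast
qed

lemma dist_mean_a_dens: "dist_mean (a_dens t) = lsb t / 2"
  and dist_mean_b_dens: "dist_mean (b_dens t) = - lsb t / 2"
  using has_moments_dens[of t] dist_mean_eq by blast+

definition var_avg :: "nat \<Rightarrow> real" where
  "var_avg t = (dist_var (a_dens t) + dist_var (b_dens t)) / 2"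

lemma dist_var_dens_rec:
  "dist_var (a_dens (2*t)) = var_avg t + (of_int (lsb t))^2 / 4"
  "dist_var (b_dens (2*t)) = var_avg t + (2 * of_int (lsb t) - of_int (lsb (t+1)) + 1)^2 / 4"
  "dist_var (a_dens (2*t+1)) = var_avg t + (2 * of_int (lsb t) - of_int (lsb (t+1)))^2 / 4"
  "dist_var (b_dens (2*t+1)) = var_avg (t+1) + (of_int (lsb (t+1)) + 1)^2 / 4"
proof -
  obtain sa sb sa' sb' where a: "has_moments (a_dens t) 1 (lsb t / 2) sa"
    and b: "has_moments (b_dens t) 1 (- lsb t / 2) sb"
    and a': "has_moments (a_dens (t+1)) 1 (lsb (t+1) / 2) sa'"
    and b': "has_moments (b_dens (t+1)) 1 (- lsb (t+1) / 2) sb'"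
    using has_moments_dens by blast
  note var = dist_mean_var_shift_mix(2)[OF a b] dist_mean_var_shift_mix(2)[OF a' b']
  show "dist_var (a_dens (2*t)) = var_avg t + (of_int (lsb t))^2 / 4"
    unfolding a_dens_even var var_avg_def by (simp add: field_simps power2_eq_square)
  show "dist_var (b_dens (2*t)) = var_avg t + (2 * of_int (lsb t) - of_int (lsb (t+1)) + 1)^2 / 4"
    unfolding b_dens_even var var_avg_def by (simp add: field_simps power2_eq_square)
  show "dist_var (a_dens (2*t+1)) = var_avg t + (2 * of_int (lsb t) - of_int (lsb (t+1)))^2 / 4"
    unfolding a_dens_odd var var_avg_def by (simp add: field_simps power2_eq_square)
  show "dist_var (b_dens (2*t+1)) = var_avg (t+1) + (of_int (lsb (t+1)) + 1)^2 / 4"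
    unfolding b_dens_odd var var_avg_def by (simp add: field_simps power2_eq_square)
qed

lemma var_avg_double: "var_avg (2*t) = var_avg t + (if odd t then 5/4 else 0)"
  using dist_var_dens_rec(1,2)[of t] unfolding var_avg_def[of "2*t"]
  by (cases "even t") (simp_all add: lsb_def)

lemma var_avg_double_Suc: "var_avg (2*t+1) = (var_avg t + var_avg (t+1)) / 2 + 5/8"
  using dist_var_dens_rec(3,4)[of t] unfolding var_avg_def[of "2*t+1"]
  by (cases "even t") (simp_all add: lsb_def)

text \<open>Each increment is half of an earlier one plus \<open>\<plusminus>5/8\<close>, which preserves the bound \<open>5/4\<close>;
  the increment at \<open>0\<close> is its own predecessor and equals \<open>5/4\<close>.\<close>
lemma var_avg_Suc_diff: "\<bar>var_avg (t+1) - var_avg t\<bar> \<le> 5/4"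
proof -
  define \<Delta> where "\<Delta> s = var_avg (s+1) - var_avg s" for s
  have double: "\<Delta> (2*j) = \<Delta> j / 2 + 5/8 - (if odd j then 5/4 else 0)" for j
    unfolding \<Delta>_def var_avg_double var_avg_double_Suc by simp
  have double_Suc: "\<Delta> (2*j+1) = \<Delta> j / 2 - 5/8 + (if odd j then 0 else 5/4)" for j
    using var_avg_double[of "j+1"] var_avg_double_Suc[of j] unfolding \<Delta>_def by (simp add: field_simps)
  have "\<bar>\<Delta> t\<bar> \<le> 5/4"
  proof (induction t rule: less_induct)
    case (less t)
    show ?case
    proof (cases "even t")
      case True
      then obtain j where t: "t = 2*j" by blast
      show ?thesis
      proof (cases "j = 0")
        case True
        then show ?thesis
          using double[of 0] t by simp
      next
        case False
        then show ?thesis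
          using double[of j] less.IH[of j] t by (cases "odd j") simp_all
      qed
    next
      case False
      then obtain j where t: "t = 2*j+1" using oddE by blast
      then show ?thesis
        using double_Suc[of j] less.IH[of j] by (cases "odd j") simp_all
    qed
  qed
  then show ?thesis
    by (simp add: \<Delta>_def)
qed

lemma dist_var_dens_diff: "\<bar>dist_var (a_dens t) - dist_var (b_dens t)\<bar> \<le> 2"
proof (cases "even t")
  case True
  then obtain j where "t = 2*j" by blast
  then show ?thesis
    using dist_var_dens_rec(1,2)[of j] by (cases "even j") (simp_all add: lsb_def)
next
  case False
  then obtain j where t: "t = 2*j+1" using oddE by blast
  have "dist_var (a_dens t) - dist_var (b_dens t) = var_avg j - var_avg (j+1) + (if even j then -3/4 else 3/4)"
    using dist_var_dens_rec(3,4)[of j] unfolding t by (cases "even j") (simp_all add: lsb_def)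
  then show ?thesis
    using abs_le_D1[OF var_avg_Suc_diff[of j]] abs_le_D2[OF var_avg_Suc_diff[of j]]
    by (cases "even j") (auto intro!: abs_leI)
qed

lemma dist_var_dens_nonneg: "0 \<le> dist_var (a_dens t)" "0 \<le> dist_var (b_dens t)"
  using dist_var_nonneg a_dens_bounds(1) b_dens_bounds(1) by blast+

section \<open>Gaussian approximation of a two-point mixture\<close>

definition normal_cf :: "real \<Rightarrow> real \<Rightarrow> real \<Rightarrow> complex" where
  "normal_cf m v \<theta> = exp (complex_of_real m * \<i> * complex_of_real \<theta> - complex_of_real (v * \<theta>^2 / 2))"

lemma norm_exp_sub_taylor1_le: "cmod (exp z - (1 + z)) \<le> exp (cmod z) * cmod z ^ 2"
  using Taylor_exp_field[of z 1] by (simp add: power2_eq_square)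

lemma norm_exp_sub_taylor2_le: "cmod (exp z - (1 + z + z^2 / 2)) \<le> exp (cmod z) * cmod z ^ 3 / 2"
proof -
  have "(\<Sum>i\<le>2. z ^ i / fact i) = 1 + z + z^2 / 2"
    by (simp add: numeral_2_eq_2)
  then show ?thesis
    using Taylor_exp_field[of z 2] by simp
qed

lemma norm_exp_sub_cosh_le:
  fixes s :: real and D :: complex
  shows "cmod (exp (- complex_of_real s) - (exp D + exp (- D)) / 2)
    \<le> exp \<bar>s\<bar> * s^2 + exp (cmod D) * cmod D ^ 3 / 2 + cmod (complex_of_real s + D^2 / 2)"
proof -
  define A where "A = exp (- complex_of_real s) - (1 + (- complex_of_real s))"
  define B where "B z = exp z - (1 + z + z^2 / 2)" for z :: complex
  define E where "E = complex_of_real s + D^2 / 2"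
  have "exp (- complex_of_real s) - (exp D + exp (- D)) / 2 = A - (B D + B (- D)) / 2 - E"
    by (simp add: A_def B_def E_def field_simps)
  also have "cmod \<dots> \<le> cmod A + (cmod (B D) + cmod (B (- D))) / 2 + cmod E"
  proof -
    have "cmod ((B D + B (- D)) / 2) \<le> (cmod (B D) + cmod (B (- D))) / 2"
      using norm_triangle_ineq[of "B D" "B (- D)"] by (simp add: norm_divide)
    then show ?thesis
      using norm_triangle_ineq4[of "A - (B D + B (- D)) / 2" E] norm_triangle_ineq4[of A "(B D + B (- D)) / 2"]
      by linarith
  qed
  also have "\<dots> \<le> exp \<bar>s\<bar> * s^2 + (exp (cmod D) * cmod D ^ 3 / 2 + exp (cmod D) * cmod D ^ 3 / 2) / 2 + cmod E"
    unfolding A_def B_def using norm_exp_sub_taylor1_le[of "- complex_of_real s"] norm_exp_sub_taylor2_le[of D] norm_exp_sub_taylor2_le[of "- D"]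
    by (intro add_mono divide_right_mono) simp_all
  finally show ?thesis
    by (simp add: E_def)
qed

lemma norm_exp_sub_cosh_cubic:
  fixes d w \<theta> :: real
  assumes d: "\<bar>d\<bar> \<le> 3/2" and w: "\<bar>w\<bar> \<le> 3/2" and \<theta>: "\<bar>\<theta>\<bar> \<le> 4"
  defines "D \<equiv> Complex (- (w * \<theta>^2 / 2)) (d * \<theta>)"
  shows "cmod (exp (- complex_of_real (d^2 * \<theta>^2 / 2)) - (exp D + exp (- D)) / 2) \<le> 100 * exp 18 * \<bar>\<theta>\<bar>^3"
proof -
  define a where "a = \<bar>\<theta>\<bar>"
  define s where "s = d^2 * \<theta>^2 / 2"
  have a: "0 \<le> a" "a \<le> 4" "\<theta>^2 = a^2" "\<bar>\<theta>\<bar> = a"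
    using \<theta> by (auto simp: a_def)
  have a2: "a^2 \<le> 4 * a" and a4: "a^4 \<le> 4 * a^3"
    using mult_right_mono[OF a(2), of a] mult_right_mono[OF a(2), of "a^3"] a(1)
    by (simp_all add: power2_eq_square power3_eq_cube power4_eq_xxxx mult.commute)
  have d2: "d^2 \<le> 9/4" and w2: "w^2 \<le> 9/4"
    using d w abs_le_square_iff[of d "3/2"] abs_le_square_iff[of w "3/2"] by (simp_all add: power2_eq_square)
  have D: "cmod D \<le> 9/2 * a"
  proof -
    have "\<bar>w\<bar> * a^2 / 2 \<le> 3/2 * (4 * a) / 2"
      using w a2 by (intro divide_right_mono mult_mono) auto
    moreover have "\<bar>d\<bar> * a \<le> 3/2 * a"
      using d a(1) by (rule mult_right_mono)
    ultimately show ?thesis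
      using cmod_le[of D] by (simp add: D_def abs_mult a(3,4))
  qed
  have s: "0 \<le> s" "s \<le> 9/8 * a^2"
    using mult_right_mono[OF d2, of "a^2"] by (simp_all add: s_def a(3) ac_simps)
  have "exp \<bar>s\<bar> * s^2 \<le> exp 18 * (81/16 * a^3)"
  proof (rule mult_mono)
    show "exp \<bar>s\<bar> \<le> exp 18"
      using s a2 a(2) by simp
    have "s^2 \<le> (9/8 * a^2)^2"
      using s by (intro power_mono) auto
    also have "\<dots> = 81/64 * a^4"
      by (simp add: power2_eq_square power4_eq_xxxx)
    also have "\<dots> \<le> 81/16 * a^3"
      using a4 by simp
    finally show "s^2 \<le> 81/16 * a^3" .
  qed simp_all
  moreover have "exp (cmod D) * cmod D ^ 3 / 2 \<le> exp 18 * ((9/2 * a)^3) / 2"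
    using D a by (intro divide_right_mono mult_mono power_mono) auto
  moreover have "cmod (complex_of_real s + D^2 / 2) \<le> 9/4 * a^3"
  proof -
    have "complex_of_real s + D^2 / 2 = Complex (w^2 * \<theta>^4 / 8) (- (d * w * \<theta>^3 / 2))"
      by (simp add: complex_eq_iff D_def s_def power2_eq_square power3_eq_cube power4_eq_xxxx field_simps)
    moreover have "w^2 * a^4 / 8 \<le> 9/4 * (4 * a^3) / 8"
      using w2 a4 a(1) by (intro divide_right_mono mult_mono) auto
    moreover have "\<bar>d\<bar> * \<bar>w\<bar> * a^3 / 2 \<le> 3/2 * (3/2) * a^3 / 2"
      using d w a(1) by (intro divide_right_mono mult_mono) auto
    ultimately show ?thesis
      using cmod_le[of "complex_of_real s + D^2 / 2"] by (simp add: abs_mult power_abs a(4))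
  qed
  ultimately have "cmod (exp (- complex_of_real s) - (exp D + exp (- D)) / 2)
      \<le> exp 18 * (81/16 * a^3) + exp 18 * ((9/2 * a)^3) / 2 + 9/4 * a^3"
    using norm_exp_sub_cosh_le[of s D] by linarith
  also have "\<dots> = (405/8 * exp 18 + 9/4) * a^3"
    by (simp add: power_mult_distrib field_simps)
  also have "\<dots> \<le> 100 * exp 18 * a^3"
  proof (rule mult_right_mono)
    have "1 \<le> exp (18::real)"
      by simp
    then show "405/8 * exp 18 + 9/4 \<le> 100 * exp (18::real)"
      by linarith
  qed (use a(1) in simp)
  finally show ?thesis
    by (simp add: s_def a_def)
qed

lemma normal_cf_mixture_error:
  fixes m1 m2 v1 v2 \<theta> :: real
  assumes v: "0 \<le> v1" "0 \<le> v2" and m: "\<bar>m1 - m2\<bar> \<le> 3" and w: "\<bar>v1 - v2\<bar> \<le> 3" and \<theta>: "\<bar>\<theta>\<bar> \<le> 4"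
  shows "cmod (normal_cf ((m1 + m2) / 2) ((v1 + v2) / 2 + (m1 - m2)^2 / 4) \<theta>
      - (normal_cf m1 v1 \<theta> + normal_cf m2 v2 \<theta>) / 2) \<le> 100 * exp 18 * \<bar>\<theta>\<bar>^3"
proof -
  define d where "d = (m1 - m2) / 2"
  define w where "w = (v1 - v2) / 2"
  define c where "c = Complex (- ((v1 + v2) / 4 * \<theta>^2)) ((m1 + m2) / 2 * \<theta>)"
  define D where "D = Complex (- (w * \<theta>^2 / 2)) (d * \<theta>)"
  have "complex_of_real m1 * \<i> * complex_of_real \<theta> - complex_of_real (v1 * \<theta>^2 / 2) = c + D"
    "complex_of_real m2 * \<i> * complex_of_real \<theta> - complex_of_real (v2 * \<theta>^2 / 2) = c + - D"
    "complex_of_real ((m1 + m2) / 2) * \<i> * complex_of_real \<theta>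
      - complex_of_real (((v1 + v2) / 2 + (m1 - m2)^2 / 4) * \<theta>^2 / 2)
      = c + - complex_of_real (d^2 * \<theta>^2 / 2)"
    by (simp_all add: complex_eq_iff c_def D_def d_def w_def power2_eq_square field_simps)
  then have "normal_cf m1 v1 \<theta> = exp c * exp D" "normal_cf m2 v2 \<theta> = exp c * exp (- D)"
    "normal_cf ((m1 + m2) / 2) ((v1 + v2) / 2 + (m1 - m2)^2 / 4) \<theta>
      = exp c * exp (- complex_of_real (d^2 * \<theta>^2 / 2))"
    by (simp_all only: normal_cf_def exp_add)
  then have "normal_cf ((m1 + m2) / 2) ((v1 + v2) / 2 + (m1 - m2)^2 / 4) \<theta>
      - (normal_cf m1 v1 \<theta> + normal_cf m2 v2 \<theta>) / 2
      = exp c * (exp (- complex_of_real (d^2 * \<theta>^2 / 2)) - (exp D + exp (- D)) / 2)"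
    by (simp add: algebra_simps)
  moreover have "cmod (exp c) \<le> 1"
    using v by (simp add: c_def)
  moreover have "cmod (exp (- complex_of_real (d^2 * \<theta>^2 / 2)) - (exp D + exp (- D)) / 2)
      \<le> 100 * exp 18 * \<bar>\<theta>\<bar>^3"
    unfolding D_def by (rule norm_exp_sub_cosh_cubic) (use m w \<theta> in \<open>auto simp: d_def w_def\<close>)
  ultimately show ?thesis
    by (simp add: norm_mult mult_le_one order_trans[OF mult_right_mono[of _ 1]])
qed

section \<open>The entries of the error vector\<close>

lemma gauss_approx_eq_normal_cf: "gauss_approx p \<theta> = normal_cf (dist_mean p) (dist_var p) \<theta>"
  by (simp add: gauss_approx_def normal_cf_def)

lemma ee_mult_normal_cf: "ee (of_int u * \<theta>) * normal_cf m v \<theta> = normal_cf (m + of_int u) v \<theta>"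
proof -
  have "\<i> * complex_of_real (of_int u * \<theta>) + (complex_of_real m * \<i> * complex_of_real \<theta> - complex_of_real (v * \<theta>^2 / 2))
      = complex_of_real (m + of_int u) * \<i> * complex_of_real \<theta> - complex_of_real (v * \<theta>^2 / 2)"
    by (simp add: algebra_simps)
  then show ?thesis
    unfolding ee_def normal_cf_def by (metis exp_add)
qed

definition row_error :: "nat \<Rightarrow> int \<Rightarrow> int \<Rightarrow> real \<Rightarrow> complex" where
  "row_error s u w \<theta> = gauss_approx (shift_mix u w (a_dens s) (b_dens s)) \<theta>
     - (ee (of_int u * \<theta>) * alpha_star s \<theta> + ee (of_int w * \<theta>) * beta_star s \<theta>) / 2"

lemma row_error_bound:
  assumes "\<bar>u - w\<bar> \<le> 2" "\<bar>\<theta>\<bar> \<le> pi"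
  shows "cmod (row_error s u w \<theta>) \<le> 100 * exp 18 * \<bar>\<theta>\<bar>^3"
proof -
  define m1 where "m1 = lsb s / 2 + of_int u"
  define m2 where "m2 = - lsb s / 2 + of_int w"
  obtain sa sb where a: "has_moments (a_dens s) 1 (lsb s / 2) sa" and b: "has_moments (b_dens s) 1 (- lsb s / 2) sb"
    using has_moments_dens by blast
  have "row_error s u w \<theta> = normal_cf ((m1 + m2) / 2)
      ((dist_var (a_dens s) + dist_var (b_dens s)) / 2 + (m1 - m2)^2 / 4) \<theta>
      - (normal_cf m1 (dist_var (a_dens s)) \<theta> + normal_cf m2 (dist_var (b_dens s)) \<theta>) / 2"
    unfolding row_error_def alpha_star_def beta_star_def gauss_approx_eq_normal_cf ee_mult_normal_cf
      dist_mean_var_shift_mix[OF a b] dist_mean_a_dens dist_mean_b_dens m1_def m2_def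
    by simp
  also have "cmod \<dots> \<le> 100 * exp 18 * \<bar>\<theta>\<bar>^3"
  proof (rule normal_cf_mixture_error)
    have "m1 - m2 = of_int (lsb s) + of_int (u - w)"
      by (simp add: m1_def m2_def)
    moreover have "0 \<le> real_of_int (lsb s)" "real_of_int (lsb s) \<le> 1" "\<bar>real_of_int (u - w)\<bar> \<le> 2"
      using assms(1) by (simp_all add: lsb_def)
    ultimately show "\<bar>m1 - m2\<bar> \<le> 3"
      by linarith
    show "\<bar>\<theta>\<bar> \<le> 4"
      using assms(2) pi_less_4 by linarith
  qed (use dist_var_dens_nonneg dist_var_dens_diff[of s] in auto)
  finally show ?thesis .
qed

lemma ee_0: "ee 0 = 1"
  and ee_minus: "ee (- \<theta>) = inverse (ee \<theta>)"
  by (simp_all add: ee_def exp_minus)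

lemma S_star_rec: "S_star t \<theta> =
   [gauss_approx (shift_mix 0 0 (a_dens t) (b_dens t)) \<theta>,
    gauss_approx (shift_mix (lsb t) (lsb (t+1) - 1) (a_dens t) (b_dens t)) \<theta>,
    gauss_approx (shift_mix (lsb t) (lsb (t+1)) (a_dens t) (b_dens t)) \<theta>,
    gauss_approx (shift_mix 0 (-1) (a_dens (t+1)) (b_dens (t+1))) \<theta>,
    gauss_approx (shift_mix 0 0 (a_dens (t+1)) (b_dens (t+1))) \<theta>,
    gauss_approx (shift_mix (lsb (t+1)) (lsb (t+2) - 1) (a_dens (t+1)) (b_dens (t+1))) \<theta>]"
proof -
  have "2*t+2 = 2*(t+1)" "t+1+1 = t+2"
    by simp_all
  then show ?thesis
    unfolding S_star_def alpha_star_def beta_star_def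
    by (simp only: a_dens_even b_dens_even a_dens_odd b_dens_odd)
qed

lemma sum_lessThan_6: "(\<Sum>j<(6::nat). f j) = f 0 + f 1 + f 2 + f 3 + f 4 + (f 5 :: complex)"
  by (simp add: numeral_eq_Suc)

lemma X_vec_even: "X_vec (2*n) \<theta> =
   [row_error (2*n) 0 0 \<theta>, row_error (2*n) 0 0 \<theta>, row_error (2*n) 0 1 \<theta>,
    row_error (2*n+1) 0 (-1) \<theta>, row_error (2*n+1) 0 0 \<theta>, row_error (2*n+1) 1 (-1) \<theta>]"
  unfolding X_vec_def S_star_rec[of "2*n"] row_error_def D0_def Let_def mat_vec_def vec_sub_def sum_lessThan_6
  by (simp add: S_star_def lsb_def ee_0 ee_minus field_simps)

lemma X_vec_odd: "X_vec (2*n+1) \<theta> =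
   [row_error (2*n+1) 0 0 \<theta>, row_error (2*n+1) 1 (-1) \<theta>, row_error (2*n+1) 1 0 \<theta>,
    row_error (2*n+2) 0 (-1) \<theta>, row_error (2*n+2) 0 0 \<theta>, row_error (2*n+2) 0 0 \<theta>]"
  unfolding X_vec_def S_star_rec[of "2*n+1"] row_error_def D1_def Let_def mat_vec_def vec_sub_def sum_lessThan_6
  by (simp add: S_star_def lsb_def ee_0 ee_minus field_simps)

lemma max_norm_le: "v \<noteq> [] \<Longrightarrow> (\<And>z. z \<in> set v \<Longrightarrow> cmod z \<le> B) \<Longrightarrow> max_norm v \<le> B"
  unfolding max_norm_def by (subst Max_le_iff) auto

lemma X_vec_nonempty: "X_vec t \<theta> \<noteq> []"
  by (simp add: X_vec_def vec_sub_def mat_vec_def S_star_def D0_def D1_def Let_def)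

lemma X_vec_entries:
  assumes "z \<in> set (X_vec t \<theta>)"
  shows "\<exists>s u w. \<bar>u - w\<bar> \<le> 2 \<and> z = row_error s u w \<theta>"
proof (cases "even t")
  case True
  then obtain n where "t = 2*n" by blast
  then show ?thesis
    using assms unfolding \<open>t = 2*n\<close> X_vec_even by force
next
  case False
  then obtain n where "t = 2*n+1" using oddE by blast
  then show ?thesis
    using assms unfolding \<open>t = 2*n+1\<close> X_vec_odd by force
qed

theorem lemma3p7:
  shows "\<exists>C::real. \<forall>(t::nat) (\<theta>::real). \<bar>\<theta>\<bar> \<le> pi \<longrightarrow>
           max_norm (X_vec t \<theta>) \<le> C * \<bar>\<theta>\<bar> ^ 3"
proof (intro exI allI impI)
  fix t :: nat and \<theta> :: real
  assume "\<bar>\<theta>\<bar> \<le> pi"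
  show "max_norm (X_vec t \<theta>) \<le> 100 * exp 18 * \<bar>\<theta>\<bar> ^ 3"
  proof (rule max_norm_le[OF X_vec_nonempty])
    fix z assume "z \<in> set (X_vec t \<theta>)"
    then obtain s u w where "\<bar>u - w\<bar> \<le> 2" "z = row_error s u w \<theta>"
      using X_vec_entries by blast
    then show "cmod z \<le> 100 * exp 18 * \<bar>\<theta>\<bar> ^ 3"
      using row_error_bound \<open>\<bar>\<theta>\<bar> \<le> pi\<close> by blast
  qed
qed

end
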